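(* Let $\theta$ be a regular cardinal and let $I$ be a weakly $\theta$-saturated, $\theta$-indecomposable ideal on a cardinal $\kappa$. Let $\langle S_\alpha:\alpha<\kappa\rangle$ be a sequence of sets of ordinals with $|S_\alpha|<\theta$ for all $\alpha$. If $\langle h_\beta:\beta<\tau\rangle$ is a sequence of functions in $\prod_{\alpha<\kappa}S_\alpha$ that is increasing in the pointwise order $\leq$, with $\mathrm{cf}(\tau)\geq\theta$, then it is eventually constant modulo $I$: there is $\beta^*<\tau$ with $\{\alpha:h_\beta(\alpha)\neq h_{\beta^*}(\alpha)\}\in I$ for all $\beta\geq\beta^*$.
   Context: By an ideal on a cardinal $\kappa$ we mean a proper ideal on $\kappa$ containing all bounded subsets of $\kappa$. $I$ is weakly $\theta$-saturated if there is no partition of $\kappa$ into $\theta$ pairwise disjoint sets not in $I$. $I$ is $\theta$-indecomposable if whenever $\langle A_i:i<\theta\rangle$ are subsets of $\kappa$ with $\bigcup_{i<\theta}A_i\notin I$, there is $w\subseteq\theta$ with $|w|<\theta$ and $\bigcup_{i\in w}A_i\notin I$. *)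

theory Defs
  imports Main
begin

unbundle cardinal_syntax

text \<open>Cardinals and ordinals are represented by well-order relations (HOL-Cardinals).
  The cardinal kappa is a cardinal order K; its elements are Field K.\<close>

definition bounded_in :: "'k rel \<Rightarrow> 'k set \<Rightarrow> bool" where
  "bounded_in K A \<longleftrightarrow> (\<exists>\<xi>\<in>Field K. A \<subseteq> underS K \<xi>)"

definition ideal_on :: "'k rel \<Rightarrow> 'k set set \<Rightarrow> bool" where
  "ideal_on K I \<longleftrightarrow>
     I \<subseteq> Pow (Field K) \<and> {} \<in> I \<and>
     Field K \<notin> I \<and>
     (\<forall>A. A \<subseteq> Field K \<and> bounded_in K A \<longrightarrow> A \<in> I) \<and>
     (\<forall>A B. A \<in> I \<and> B \<subseteq> A \<longrightarrow> B \<in> I) \<and>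
     (\<forall>A B. A \<in> I \<and> B \<in> I \<longrightarrow> A \<union> B \<in> I)"

definition weakly_saturated :: "'t rel \<Rightarrow> 'k rel \<Rightarrow> 'k set set \<Rightarrow> bool" where
  "weakly_saturated \<Theta> K I \<longleftrightarrow>
     \<not> (\<exists>A :: 't \<Rightarrow> 'k set.
           (\<forall>i\<in>Field \<Theta>. A i \<subseteq> Field K \<and> A i \<notin> I) \<and>
           (\<forall>i\<in>Field \<Theta>. \<forall>j\<in>Field \<Theta>. i \<noteq> j \<longrightarrow> A i \<inter> A j = {}) \<and>
           (\<Union>i\<in>Field \<Theta>. A i) = Field K)"

definition indecomposable :: "'t rel \<Rightarrow> 'k rel \<Rightarrow> 'k set set \<Rightarrow> bool" where
  "indecomposable \<Theta> K I \<longleftrightarrow>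
     (\<forall>A :: 't \<Rightarrow> 'k set.
        (\<forall>i\<in>Field \<Theta>. A i \<subseteq> Field K) \<and> (\<Union>i\<in>Field \<Theta>. A i) \<notin> I \<longrightarrow>
        (\<exists>w. w \<subseteq> Field \<Theta> \<and> |w| <o \<Theta> \<and> (\<Union>i\<in>w. A i) \<notin> I))"

definition regular_cardinal :: "'t rel \<Rightarrow> bool" where
  "regular_cardinal \<Theta> \<longleftrightarrow> Card_order \<Theta> \<and> infinite (Field \<Theta>) \<and> regularCard \<Theta>"

definition cf_ge :: "'b rel \<Rightarrow> 't rel \<Rightarrow> bool" where
  "cf_ge T \<Theta> \<longleftrightarrow>
     (\<forall>X. X \<subseteq> Field T \<and> (\<forall>\<beta>\<in>Field T. \<exists>x\<in>X. (\<beta>, x) \<in> T) \<longrightarrow> \<not> ( |X| <o \<Theta>))"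

definition card_less :: "'a set \<Rightarrow> 't rel \<Rightarrow> bool" where
  "card_less A \<Theta> \<longleftrightarrow> |A| <o \<Theta>"

end

theory Submission
  imports Defs
begin

text \<open>Suppose the sequence is not eventually constant modulo \<open>I\<close>. Since \<open>cf(\<tau>) \<ge> \<theta>\<close>, a maximality
  argument yields \<open>\<theta>\<close> pairwise non-overlapping intervals \<open>[\<beta>\<^sub>i, \<beta>'\<^sub>i]\<close> of \<open>\<tau>\<close> on each of which the
  set \<open>Z\<^sub>i\<close> of coordinates where \<open>h\<close> changes is \<open>I\<close>-positive. Along any coordinate \<open>\<alpha>\<close> the values
  \<open>h\<^bsub>\<beta>'\<^sub>i\<^esub>(\<alpha>)\<close> strictly increase over the intervals with \<open>\<alpha> \<in> Z\<^sub>i\<close>, so \<open>\<alpha>\<close> lies in fewer than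
  \<open>\<theta>\<close> of the \<open>Z\<^sub>i\<close>, as \<open>|S\<^sub>\<alpha>| < \<theta>\<close>.

  Such a family of \<open>\<theta>\<close> positive sets cannot exist. Its tail unions \<open>W\<^sub>j = \<Union>\<^sub>i\<^sub>\<ge>\<^sub>j Z\<^sub>i\<close> decrease,
  and every point leaves them eventually by regularity of \<open>\<theta>\<close>; indecomposability then gives, above each
  \<open>j\<close>, some \<open>m\<close> with \<open>W\<^sub>j - W\<^sub>m\<close> positive. The same interval argument, now inside \<open>\<theta>\<close>, produces
  \<open>\<theta>\<close> pairwise disjoint positive sets, contradicting weak saturation.\<close>

lemma ideal_on_subset: "ideal_on K I \<Longrightarrow> A \<in> I \<Longrightarrow> B \<subseteq> A \<Longrightarrow> B \<in> I"
  unfolding ideal_on_def by blast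

lemma ideal_on_empty: "ideal_on K I \<Longrightarrow> {} \<in> I"
  unfolding ideal_on_def by blast

lemma indecomposableD:
  assumes "indecomposable \<Theta> K I" "\<forall>i\<in>Field \<Theta>. A i \<subseteq> Field K" "(\<Union>i\<in>Field \<Theta>. A i) \<notin> I"
  shows "\<exists>w\<subseteq>Field \<Theta>. |w| <o \<Theta> \<and> (\<Union>i\<in>w. A i) \<notin> I"
  using assms unfolding indecomposable_def by blast

lemma Well_order_refl: "Well_order r \<Longrightarrow> a \<in> Field r \<Longrightarrow> (a, a) \<in> r"
  by (metis refl_onD wo_rel.REFL wo_rel_def)

lemma Well_order_trans: "Well_order r \<Longrightarrow> (a, b) \<in> r \<Longrightarrow> (b, c) \<in> r \<Longrightarrow> (a, c) \<in> r"
  by (metis transD wo_rel.TRANS wo_rel_def)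

lemma Well_order_antisym: "Well_order r \<Longrightarrow> (a, b) \<in> r \<Longrightarrow> (b, a) \<in> r \<Longrightarrow> a = b"
  by (metis antisymD wo_rel.ANTISYM wo_rel_def)

lemma Well_order_total:
  "Well_order r \<Longrightarrow> a \<in> Field r \<Longrightarrow> b \<in> Field r \<Longrightarrow> (a, b) \<in> r \<or> (b, a) \<in> r"
  by (metis wo_rel.TOTALS wo_rel_def)

lemma Well_order_not_le_imp_less:
  assumes "Well_order r" "a \<in> Field r" "b \<in> Field r" "(b, a) \<notin> r"
  shows "(a, b) \<in> r \<and> a \<noteq> b"
  using assms Well_order_total Well_order_refl by metis

definition small_sets_bounded :: "'t rel \<Rightarrow> 'a rel \<Rightarrow> bool" where
  "small_sets_bounded \<Theta> R \<longleftrightarrow>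
     (\<forall>X. X \<subseteq> Field R \<and> |X| <o \<Theta> \<longrightarrow> (\<exists>j\<in>Field R. \<forall>x\<in>X. (x, j) \<in> R \<and> x \<noteq> j))"

lemma small_sets_boundedD:
  "small_sets_bounded \<Theta> R \<Longrightarrow> X \<subseteq> Field R \<Longrightarrow> |X| <o \<Theta> \<Longrightarrow>
    \<exists>j\<in>Field R. \<forall>x\<in>X. (x, j) \<in> R \<and> x \<noteq> j"
  unfolding small_sets_bounded_def by blast

lemma small_sets_bounded_regular_cardinal:
  assumes "regular_cardinal \<Theta>"
  shows "small_sets_bounded \<Theta> \<Theta>"
  unfolding small_sets_bounded_def
proof (intro allI impI)
  fix X assume X: "X \<subseteq> Field \<Theta> \<and> |X| <o \<Theta>"
  have card: "Card_order \<Theta>" "infinite (Field \<Theta>)" "regularCard \<Theta>"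
    using assms by (auto simp: regular_cardinal_def)
  have wo: "Well_order \<Theta>" using card(1) by (simp add: card_order_on_well_order_on)
  have "\<not> cofinal X \<Theta>"
    using card(3) X not_ordLess_ordIso unfolding regularCard_def by blast
  then obtain a where a: "a \<in> Field \<Theta>" "\<forall>x\<in>X. (a, x) \<in> \<Theta> \<longrightarrow> a = x"
    unfolding cofinal_def by blast
  obtain b where b: "b \<in> Field \<Theta>" "(a, b) \<in> \<Theta>" "a \<noteq> b"
    using infinite_Card_order_limit[OF card(1,2) a(1)] by blast
  have "(x, b) \<in> \<Theta> \<and> x \<noteq> b" if "x \<in> X" for x
  proof -
    have "(x, a) \<in> \<Theta>"
      using that X a Well_order_total[OF wo] Well_order_refl[OF wo] by blast
    then show ?thesis
      using b Well_order_trans[OF wo] Well_order_antisym[OF wo] by metis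
  qed
  then show "\<exists>j\<in>Field \<Theta>. \<forall>x\<in>X. (x, j) \<in> \<Theta> \<and> x \<noteq> j" using b(1) by blast
qed

lemma small_sets_bounded_cf_ge:
  assumes "Well_order T" "cf_ge T \<Theta>"
  shows "small_sets_bounded \<Theta> T"
  unfolding small_sets_bounded_def
proof (intro allI impI)
  fix X assume X: "X \<subseteq> Field T \<and> |X| <o \<Theta>"
  then have "\<not> (\<forall>\<beta>\<in>Field T. \<exists>x\<in>X. (\<beta>, x) \<in> T)"
    using assms(2) unfolding cf_ge_def by (auto dest: spec[of _ X])
  then obtain b where b: "b \<in> Field T" "\<forall>x\<in>X. (b, x) \<notin> T" by blast
  have "(x, b) \<in> T \<and> x \<noteq> b" if "x \<in> X" for x
    using Well_order_not_le_imp_less[OF assms(1)] X b that by blast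
  then show "\<exists>j\<in>Field T. \<forall>x\<in>X. (x, j) \<in> T \<and> x \<noteq> j" using b(1) by blast
qed

text \<open>A set of pairs \<open>(a, b)\<close> read as intervals \<open>[a, b]\<close>: distinct intervals meet at most in an
  endpoint.\<close>
definition separated :: "'a rel \<Rightarrow> ('a \<times> 'a) set \<Rightarrow> bool" where
  "separated R M \<longleftrightarrow> (\<forall>p\<in>M. \<forall>q\<in>M. p \<noteq> q \<longrightarrow> (snd p, fst q) \<in> R \<or> (snd q, fst p) \<in> R)"

lemma separated_Union_chain:
  assumes "C \<in> chains {M. M \<subseteq> G \<and> separated R M}"
  shows "\<Union>C \<in> {M. M \<subseteq> G \<and> separated R M}"
proof -
  have "separated R (\<Union>C)"
    unfolding separated_def
  proof (intro ballI impI)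
    fix p q assume "p \<in> \<Union>C" "q \<in> \<Union>C" "p \<noteq> q"
    then obtain A B where AB: "A \<in> C" "B \<in> C" "p \<in> A" "q \<in> B" by blast
    then have "A \<subseteq> B \<or> B \<subseteq> A" "separated R A" "separated R B"
      using assms unfolding chains_def chain_subset_def by auto
    then show "(snd p, fst q) \<in> R \<or> (snd q, fst p) \<in> R"
      using AB \<open>p \<noteq> q\<close> unfolding separated_def by blast
  qed
  then show ?thesis using assms by (auto simp: chains_def)
qed

text \<open>A maximal separated set of \<open>P\<close>-intervals cannot be small: a strict upper bound \<open>j\<close> of its
  right endpoints could be extended to a further \<open>P\<close>-interval \<open>[j, m]\<close>.\<close>
lemma exists_large_separated:
  assumes wo: "Well_order R" and bounded: "small_sets_bounded \<Theta> R"
    and step: "\<forall>j\<in>Field R. \<exists>m. (j, m) \<in> R \<and> P j m"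
  shows "\<exists>M. M \<subseteq> {p \<in> R. P (fst p) (snd p)} \<and> separated R M \<and> \<not> |M| <o \<Theta>"
proof -
  define \<A> where "\<A> = {M. M \<subseteq> {p \<in> R. P (fst p) (snd p)} \<and> separated R M}"
  have "\<forall>C\<in>chains \<A>. \<Union>C \<in> \<A>" using separated_Union_chain unfolding \<A>_def by blast
  then obtain M where M: "M \<in> \<A>" "\<forall>X\<in>\<A>. M \<subseteq> X \<longrightarrow> X = M"
    using Zorn_Lemma by blast
  have "\<not> |M| <o \<Theta>"
  proof
    assume "|M| <o \<Theta>"
    then have "|snd ` M| <o \<Theta>" using card_of_image ordLeq_ordLess_trans by blast
    moreover have "snd ` M \<subseteq> Field R" using M(1) by (force simp: \<A>_def Field_def)
    ultimately obtain j where j: "j \<in> Field R" "\<forall>x\<in>snd ` M. (x, j) \<in> R \<and> x \<noteq> j"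
      using small_sets_boundedD[OF bounded] by blast
    obtain m where m: "(j, m) \<in> R" "P j m" using step j(1) by blast
    have "(j, m) \<notin> M"
      using j(2) m(1) Well_order_antisym[OF wo] by force
    moreover have "insert (j, m) M \<in> \<A>"
      using M(1) m j(2) unfolding \<A>_def separated_def by auto
    ultimately show False using M(2) by blast
  qed
  then show ?thesis using M(1) unfolding \<A>_def by blast
qed

lemma separated_intervals_family:
  assumes "Card_order \<Theta>" "Well_order R" "small_sets_bounded \<Theta> R"
    and "\<forall>j\<in>Field R. \<exists>m. (j, m) \<in> R \<and> P j m"
  obtains a b where "\<forall>i\<in>Field \<Theta>. (a i, b i) \<in> R \<and> P (a i) (b i)"
    and "\<forall>i\<in>Field \<Theta>. \<forall>j\<in>Field \<Theta>. i \<noteq> j \<longrightarrow> (b i, a j) \<in> R \<or> (b j, a i) \<in> R"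
proof -
  obtain M where M: "M \<subseteq> {p \<in> R. P (fst p) (snd p)}" "separated R M" "\<not> |M| <o \<Theta>"
    using exists_large_separated[OF assms(2-4)] by blast
  have "\<Theta> \<le>o |M|"
    using M(3) ordLess_or_ordLeq[OF card_of_Well_order card_order_on_well_order_on[OF assms(1)]]
    by blast
  then have "|Field \<Theta>| \<le>o |M|"
    using card_of_Field_ordIso[OF assms(1)] ordIso_ordLeq_trans by blast
  then obtain e where e: "inj_on e (Field \<Theta>)" "e ` Field \<Theta> \<subseteq> M"
    using card_of_ordLeq by metis
  show thesis
  proof (rule that[of "\<lambda>i. fst (e i)" "\<lambda>i. snd (e i)"])
    show "\<forall>i\<in>Field \<Theta>. (fst (e i), snd (e i)) \<in> R \<and> P (fst (e i)) (snd (e i))"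
      using e(2) M(1) by auto
    show "\<forall>i\<in>Field \<Theta>. \<forall>j\<in>Field \<Theta>. i \<noteq> j \<longrightarrow>
        (snd (e i), fst (e j)) \<in> R \<or> (snd (e j), fst (e i)) \<in> R"
    proof (intro ballI impI)
      fix i j assume "i \<in> Field \<Theta>" "j \<in> Field \<Theta>" "i \<noteq> j"
      then have "e i \<in> M" "e j \<in> M" "e i \<noteq> e j" using e by (auto dest: inj_onD)
      then show "(snd (e i), fst (e j)) \<in> R \<or> (snd (e j), fst (e i)) \<in> R"
        using M(2) unfolding separated_def by blast
    qed
  qed
qed

lemma not_weakly_saturated_disjoint_family:
  assumes idl: "ideal_on K I" and i0: "i0 \<in> Field \<Theta>"
    and pos: "\<forall>i\<in>Field \<Theta>. E i \<subseteq> Field K \<and> E i \<notin> I"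
    and disj: "\<forall>i\<in>Field \<Theta>. \<forall>j\<in>Field \<Theta>. i \<noteq> j \<longrightarrow> E i \<inter> E j = {}"
  shows "\<not> weakly_saturated \<Theta> K I"
proof -
  define A where
    "A = (\<lambda>i. if i = i0 then Field K - (\<Union>l\<in>Field \<Theta> - {i0}. E l) else E i)"
  have "E i0 \<subseteq> A i0"
    unfolding A_def using pos disj i0 by (auto, metis IntI empty_iff)
  then have "A i0 \<notin> I" using pos i0 ideal_on_subset[OF idl] by blast
  then have "\<forall>i\<in>Field \<Theta>. A i \<subseteq> Field K \<and> A i \<notin> I"
    using pos unfolding A_def by auto
  moreover have "\<forall>i\<in>Field \<Theta>. \<forall>j\<in>Field \<Theta>. i \<noteq> j \<longrightarrow> A i \<inter> A j = {}"
    using disj unfolding A_def by auto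
  moreover have "(\<Union>i\<in>Field \<Theta>. A i) = Field K"
  proof
    show "Field K \<subseteq> (\<Union>i\<in>Field \<Theta>. A i)"
      unfolding A_def using i0 by auto
  qed (use pos in \<open>auto simp: A_def\<close>)
  ultimately show ?thesis
    unfolding weakly_saturated_def not_not by (intro exI[of _ A]) blast
qed

definition tail_union :: "'t rel \<Rightarrow> ('t \<Rightarrow> 'k set) \<Rightarrow> 't \<Rightarrow> 'k set" where
  "tail_union \<Theta> Z j = (\<Union>i\<in>\<Theta> `` {j}. Z i)"

lemma tail_union_antimono:
  assumes "Well_order \<Theta>" "(a, b) \<in> \<Theta>"
  shows "tail_union \<Theta> Z b \<subseteq> tail_union \<Theta> Z a"
  using Well_order_trans[OF assms] unfolding tail_union_def by auto

lemma tail_union_subset: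
  assumes "\<forall>i\<in>Field \<Theta>. Z i \<subseteq> A"
  shows "tail_union \<Theta> Z j \<subseteq> A"
  using assms FieldI2 unfolding tail_union_def by fastforce

lemma tail_union_escape:
  assumes "regular_cardinal \<Theta>" "|{i \<in> Field \<Theta>. \<alpha> \<in> Z i}| <o \<Theta>"
  shows "\<exists>k\<in>Field \<Theta>. \<alpha> \<notin> tail_union \<Theta> Z k"
proof -
  have wo: "Well_order \<Theta>"
    using assms(1) card_order_on_well_order_on by (auto simp: regular_cardinal_def)
  obtain k where k: "k \<in> Field \<Theta>" "\<forall>i\<in>{i \<in> Field \<Theta>. \<alpha> \<in> Z i}. (i, k) \<in> \<Theta> \<and> i \<noteq> k"
    using small_sets_boundedD[OF small_sets_bounded_regular_cardinal[OF assms(1)] _ assms(2)]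
    by blast
  have "\<alpha> \<notin> Z i" if "(k, i) \<in> \<Theta>" for i
    using k(2) that FieldI2[OF that] Well_order_antisym[OF wo] by blast
  then show ?thesis using k(1) unfolding tail_union_def by blast
qed

lemma UN_tail_union_Diff:
  assumes reg: "regular_cardinal \<Theta>" and ZK: "\<forall>i\<in>Field \<Theta>. Z i \<subseteq> Field K"
    and point_small: "\<forall>\<alpha>\<in>Field K. |{i \<in> Field \<Theta>. \<alpha> \<in> Z i}| <o \<Theta>"
  shows "(\<Union>k\<in>Field \<Theta>. tail_union \<Theta> Z j - tail_union \<Theta> Z k) = tail_union \<Theta> Z j"
proof
  show "tail_union \<Theta> Z j \<subseteq> (\<Union>k\<in>Field \<Theta>. tail_union \<Theta> Z j - tail_union \<Theta> Z k)"
  proof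
    fix \<alpha> assume \<alpha>: "\<alpha> \<in> tail_union \<Theta> Z j"
    then have "\<alpha> \<in> Field K" using tail_union_subset[OF ZK] by blast
    then obtain k where "k \<in> Field \<Theta>" "\<alpha> \<notin> tail_union \<Theta> Z k"
      using tail_union_escape[OF reg point_small[rule_format]] by blast
    then show "\<alpha> \<in> (\<Union>k\<in>Field \<Theta>. tail_union \<Theta> Z j - tail_union \<Theta> Z k)" using \<alpha> by blast
  qed
qed blast

text \<open>Indecomposability applied to the cover \<open>W\<^sub>j = \<Union>\<^sub>k (W\<^sub>j - W\<^sub>k)\<close>, followed by bounding the
  resulting small set of indices \<open>k\<close> by a single \<open>m\<close>.\<close>
lemma tail_union_positive_drop:
  assumes reg: "regular_cardinal \<Theta>" and idl: "ideal_on K I"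
    and ind: "indecomposable \<Theta> K I"
    and pos: "\<forall>i\<in>Field \<Theta>. Z i \<subseteq> Field K \<and> Z i \<notin> I"
    and point_small: "\<forall>\<alpha>\<in>Field K. |{i \<in> Field \<Theta>. \<alpha> \<in> Z i}| <o \<Theta>"
    and j: "j \<in> Field \<Theta>"
  shows "\<exists>m. (j, m) \<in> \<Theta> \<and> tail_union \<Theta> Z j - tail_union \<Theta> Z m \<notin> I"
proof -
  let ?W = "tail_union \<Theta> Z"
  have wo: "Well_order \<Theta>"
    using reg card_order_on_well_order_on by (auto simp: regular_cardinal_def)
  have ZK: "\<forall>i\<in>Field \<Theta>. Z i \<subseteq> Field K" using pos by blast
  have WK: "?W k \<subseteq> Field K" for k using tail_union_subset[OF ZK] .
  have "Z j \<subseteq> ?W j" using j Well_order_refl[OF wo] unfolding tail_union_def by blast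
  then have "?W j \<notin> I" using pos j ideal_on_subset[OF idl] by blast
  moreover have "(\<Union>k\<in>Field \<Theta>. ?W j - ?W k) = ?W j"
    by (rule UN_tail_union_Diff[OF reg ZK point_small])
  moreover have "\<forall>k\<in>Field \<Theta>. ?W j - ?W k \<subseteq> Field K" using WK by blast
  ultimately obtain w where w: "w \<subseteq> Field \<Theta>" "|w| <o \<Theta>" "(\<Union>k\<in>w. ?W j - ?W k) \<notin> I"
    using indecomposableD[OF ind, of "\<lambda>k. ?W j - ?W k"] by auto
  obtain m where m: "m \<in> Field \<Theta>" "\<forall>k\<in>w. (k, m) \<in> \<Theta> \<and> k \<noteq> m"
    using small_sets_boundedD[OF small_sets_bounded_regular_cardinal[OF reg] w(1,2)] by blast
  have "?W j - ?W k \<subseteq> ?W j - ?W m" if "k \<in> w" for k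
  proof -
    have "(k, m) \<in> \<Theta>" using m(2) that by blast
    then have "?W m \<subseteq> ?W k" by (rule tail_union_antimono[OF wo])
    then show ?thesis by blast
  qed
  then have "(\<Union>k\<in>w. ?W j - ?W k) \<subseteq> ?W j - ?W m" by (rule UN_least)
  then have drop: "?W j - ?W m \<notin> I" using w(3) ideal_on_subset[OF idl] by blast
  moreover have "(j, m) \<in> \<Theta>"
  proof (rule ccontr)
    assume "(j, m) \<notin> \<Theta>"
    then have "(m, j) \<in> \<Theta>" using Well_order_total[OF wo m(1) j] by blast
    then have "?W j \<subseteq> ?W m" by (rule tail_union_antimono[OF wo])
    then show False using drop ideal_on_empty[OF idl] by (metis Diff_eq_empty_iff)
  qed
  ultimately show ?thesis by blast
qed

lemma no_point_small_positive_family: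
  assumes reg: "regular_cardinal \<Theta>" and idl: "ideal_on K I"
    and sat: "weakly_saturated \<Theta> K I" and ind: "indecomposable \<Theta> K I"
    and pos: "\<forall>i\<in>Field \<Theta>. Z i \<subseteq> Field K \<and> Z i \<notin> I"
    and point_small: "\<forall>\<alpha>\<in>Field K. |{i \<in> Field \<Theta>. \<alpha> \<in> Z i}| <o \<Theta>"
  shows False
proof -
  let ?W = "tail_union \<Theta> Z"
  have card: "Card_order \<Theta>" "infinite (Field \<Theta>)"
    using reg by (auto simp: regular_cardinal_def)
  have wo: "Well_order \<Theta>" using card(1) by (simp add: card_order_on_well_order_on)
  have "\<forall>j\<in>Field \<Theta>. \<exists>m. (j, m) \<in> \<Theta> \<and> ?W j - ?W m \<notin> I"
    using tail_union_positive_drop[OF reg idl ind pos point_small] by blast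
  then obtain a b where ab: "\<forall>i\<in>Field \<Theta>. (a i, b i) \<in> \<Theta> \<and> ?W (a i) - ?W (b i) \<notin> I"
    and sep: "\<forall>i\<in>Field \<Theta>. \<forall>j\<in>Field \<Theta>. i \<noteq> j \<longrightarrow> (b i, a j) \<in> \<Theta> \<or> (b j, a i) \<in> \<Theta>"
    by (rule separated_intervals_family[OF card(1) wo small_sets_bounded_regular_cardinal[OF reg]])
  define E where "E i = ?W (a i) - ?W (b i)" for i
  have E_pos: "\<forall>i\<in>Field \<Theta>. E i \<subseteq> Field K \<and> E i \<notin> I"
    using ab tail_union_subset[of \<Theta> Z "Field K"] pos unfolding E_def by blast
  have E_disj: "E i \<inter> E j = {}" if "i \<in> Field \<Theta>" "j \<in> Field \<Theta>" "i \<noteq> j" for i j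
  proof -
    have "(b i, a j) \<in> \<Theta> \<or> (b j, a i) \<in> \<Theta>" using sep that by blast
    then have "?W (a j) \<subseteq> ?W (b i) \<or> ?W (a i) \<subseteq> ?W (b j)"
      using tail_union_antimono[OF wo] by metis
    then show ?thesis unfolding E_def by blast
  qed
  obtain i0 where "i0 \<in> Field \<Theta>" using card(2) by (metis finite.emptyI ex_in_conv)
  with E_pos E_disj show False
    using not_weakly_saturated_disjoint_family[OF idl, of i0 \<Theta> E] sat by blast
qed

text \<open>Along a separated family of intervals, the values of a monotone \<open>g\<close> at the right endpoints of
  the intervals on which \<open>g\<close> changes are strictly increasing.\<close>
lemma inj_on_right_endpoints_of_changes:
  fixes g :: "'b \<Rightarrow> 'o::order"
  assumes mono: "\<forall>x\<in>Field T. \<forall>y\<in>Field T. (x, y) \<in> T \<longrightarrow> g x \<le> g y"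
    and intervals: "\<forall>i\<in>J. (a i, b i) \<in> T"
    and sep: "\<forall>i\<in>J. \<forall>j\<in>J. i \<noteq> j \<longrightarrow> (b i, a j) \<in> T \<or> (b j, a i) \<in> T"
  shows "inj_on (\<lambda>i. g (b i)) {i \<in> J. g (b i) \<noteq> g (a i)}"
proof -
  have less: "g (b i) < g (b j)"
    if "i \<in> J" "j \<in> J" "g (b j) \<noteq> g (a j)" "(b i, a j) \<in> T" for i j
  proof -
    have "g (b i) \<le> g (a j)" "g (a j) \<le> g (b j)"
      using mono intervals that by (blast intro: FieldI1 FieldI2)+
    moreover have "g (a j) \<noteq> g (b j)" using that(3) by simp
    ultimately show ?thesis by (metis order_le_neq_trans le_less_trans)
  qed
  show ?thesis
  proof (rule inj_onI)
    fix i j assume i: "i \<in> {i \<in> J. g (b i) \<noteq> g (a i)}" and j: "j \<in> {i \<in> J. g (b i) \<noteq> g (a i)}"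
      and eq: "g (b i) = g (b j)"
    show "i = j"
    proof (rule ccontr)
      assume "i \<noteq> j"
      then have "(b i, a j) \<in> T \<or> (b j, a i) \<in> T" using sep i j by blast
      then show False using less[of i j] less[of j i] i j eq by auto
    qed
  qed
qed

lemma card_changes_ordLess:
  fixes g :: "'b \<Rightarrow> 'o::order"
  assumes mono: "\<forall>x\<in>Field T. \<forall>y\<in>Field T. (x, y) \<in> T \<longrightarrow> g x \<le> g y"
    and intervals: "\<forall>i\<in>J. (a i, b i) \<in> T"
    and sep: "\<forall>i\<in>J. \<forall>j\<in>J. i \<noteq> j \<longrightarrow> (b i, a j) \<in> T \<or> (b j, a i) \<in> T"
    and in_S: "\<forall>i\<in>J. g (b i) \<in> S" and small: "|S| <o \<Theta>"
  shows "|{i \<in> J. g (b i) \<noteq> g (a i)}| <o \<Theta>"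
proof -
  have "|{i \<in> J. g (b i) \<noteq> g (a i)}| \<le>o |S|"
    using inj_on_right_endpoints_of_changes[OF mono intervals sep] in_S card_of_ordLeq by blast
  then show ?thesis using small ordLeq_ordLess_trans by blast
qed

theorem corollary2p2:
  fixes \<Theta> :: "'t rel" and K :: "'k rel" and I :: "'k set set"
    and S :: "'k \<Rightarrow> 'o::wellorder set"
    and T :: "'b rel" and h :: "'b \<Rightarrow> 'k \<Rightarrow> 'o"
  assumes "regular_cardinal \<Theta>"
    and "Card_order K"
    and "ideal_on K I"
    and "weakly_saturated \<Theta> K I"
    and "indecomposable \<Theta> K I"
    and "\<forall>\<alpha>\<in>Field K. card_less (S \<alpha>) \<Theta>"
    and "Well_order T"
    and "\<forall>\<beta>\<in>Field T. \<forall>\<alpha>\<in>Field K. h \<beta> \<alpha> \<in> S \<alpha>"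
    and "\<forall>\<beta>\<in>Field T. \<forall>\<beta>'\<in>Field T. (\<beta>, \<beta>') \<in> T \<longrightarrow> (\<forall>\<alpha>\<in>Field K. h \<beta> \<alpha> \<le> h \<beta>' \<alpha>)"
    and "cf_ge T \<Theta>"
  shows "\<exists>\<beta>s\<in>Field T. \<forall>\<beta>\<in>Field T. (\<beta>s, \<beta>) \<in> T \<longrightarrow>
           {\<alpha>\<in>Field K. h \<beta> \<alpha> \<noteq> h \<beta>s \<alpha>} \<in> I"
proof (rule ccontr)
  assume "\<not> ?thesis"
  then have step: "\<forall>j\<in>Field T. \<exists>m. (j, m) \<in> T \<and> {\<alpha>\<in>Field K. h m \<alpha> \<noteq> h j \<alpha>} \<notin> I"
    by blast
  have card: "Card_order \<Theta>" using assms(1) by (simp add: regular_cardinal_def)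
  obtain a b
    where ab: "\<forall>i\<in>Field \<Theta>. (a i, b i) \<in> T \<and> {\<alpha>\<in>Field K. h (b i) \<alpha> \<noteq> h (a i) \<alpha>} \<notin> I"
      and sep: "\<forall>i\<in>Field \<Theta>. \<forall>j\<in>Field \<Theta>. i \<noteq> j \<longrightarrow> (b i, a j) \<in> T \<or> (b j, a i) \<in> T"
    by (rule separated_intervals_family[OF card assms(7) small_sets_bounded_cf_ge[OF assms(7,10)] step])
  define Z where "Z i = {\<alpha>\<in>Field K. h (b i) \<alpha> \<noteq> h (a i) \<alpha>}" for i
  have pos: "\<forall>i\<in>Field \<Theta>. Z i \<subseteq> Field K \<and> Z i \<notin> I" using ab unfolding Z_def by blast
  have point_small: "\<forall>\<alpha>\<in>Field K. |{i \<in> Field \<Theta>. \<alpha> \<in> Z i}| <o \<Theta>"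
  proof
    fix \<alpha> assume \<alpha>: "\<alpha> \<in> Field K"
    have "{i \<in> Field \<Theta>. \<alpha> \<in> Z i} = {i \<in> Field \<Theta>. h (b i) \<alpha> \<noteq> h (a i) \<alpha>}"
      using \<alpha> unfolding Z_def by blast
    moreover have "|{i \<in> Field \<Theta>. h (b i) \<alpha> \<noteq> h (a i) \<alpha>}| <o \<Theta>"
    proof (rule card_changes_ordLess[OF _ _ sep])
      show "\<forall>x\<in>Field T. \<forall>y\<in>Field T. (x, y) \<in> T \<longrightarrow> h x \<alpha> \<le> h y \<alpha>" using assms(9) \<alpha> by blast
      show "\<forall>i\<in>Field \<Theta>. (a i, b i) \<in> T" using ab by blast
      show "\<forall>i\<in>Field \<Theta>. h (b i) \<alpha> \<in> S \<alpha>" using assms(8) ab \<alpha> by (blast intro: FieldI2)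
      show "|S \<alpha>| <o \<Theta>" using assms(6) \<alpha> unfolding card_less_def by blast
    qed
    ultimately show "|{i \<in> Field \<Theta>. \<alpha> \<in> Z i}| <o \<Theta>" by simp
  qed
  show False by (rule no_point_small_positive_family[OF assms(1,3,4,5) pos point_small])
qed

end
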